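(* Let $L$ be a BZ--lattice whose $0$ is meet--irreducible (equivalently, whose $1$ is join--irreducible). Then $L$ is an antiortholattice, i.e. $\{a\in L: a\wedge a'=0\}=\{0,1\}$ and the Brouwer complement of $L$ is the trivial one ($0^\sim=1$ and $a^\sim=0$ for all $a\in L\setminus\{0\}$). In particular, every BZ--lattice whose lattice reduct is a chain is an antiortholattice.
   Context: A pseudo--Kleene algebra is a bounded lattice with a unary operation $'$ satisfying $a''=a$, $a\leq b\Rightarrow b'\leq a'$, and $a\wedge a'\leq b\vee b'$ for all $a,b$. A BZ--lattice is an algebra $(L,\vee,\wedge,',{}^\sim,0,1)$ where $(L,\vee,\wedge,',0,1)$ is a pseudo--Kleene algebra and ${}^\sim$ (the Brouwer complement) satisfies, for all $a,b$: $a\wedge a^\sim=0$, $a\leq a^{\sim\sim}$, $a^{\sim\prime}=a^{\sim\sim}$, and $a\leq b\Rightarrow b^\sim\leq a^\sim$. "$0$ meet--irreducible" means $a\wedge b=0$ implies $a=0$ or $b=0$. An antiortholattice is a pseudo--Kleene algebra with $\{a: a\wedge a'=0\}=\{0,1\}$, equipped with the trivial Brouwer complement. *)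

theory Defs
  imports Main
begin

text \<open>The lattice is a type of class bounded_lattice; the Kleene complement is
  a function kc and the Brouwer complement a function bc on that type.\<close>

definition pseudo_kleene :: "('a::bounded_lattice \<Rightarrow> 'a) \<Rightarrow> bool" where
  "pseudo_kleene kc \<longleftrightarrow>
     (\<forall>a. kc (kc a) = a) \<and>
     (\<forall>a b. a \<le> b \<longrightarrow> kc b \<le> kc a) \<and>
     (\<forall>a b. inf a (kc a) \<le> sup b (kc b))"

definition BZ_lattice :: "('a::bounded_lattice \<Rightarrow> 'a) \<Rightarrow> ('a \<Rightarrow> 'a) \<Rightarrow> bool" where
  "BZ_lattice kc bc \<longleftrightarrow>
     pseudo_kleene kc \<and>
     (\<forall>a. inf a (bc a) = bot) \<and>
     (\<forall>a. a \<le> bc (bc a)) \<and>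
     (\<forall>a. kc (bc a) = bc (bc a)) \<and>
     (\<forall>a b. a \<le> b \<longrightarrow> bc b \<le> bc a)"

definition zero_meet_irreducible :: "'a::bounded_lattice itself \<Rightarrow> bool" where
  "zero_meet_irreducible _ \<longleftrightarrow>
     (\<forall>a b::'a. inf a b = bot \<longrightarrow> a = bot \<or> b = bot)"

definition trivial_brouwer :: "('a::bounded_lattice \<Rightarrow> 'a) \<Rightarrow> bool" where
  "trivial_brouwer bc \<longleftrightarrow> bc bot = top \<and> (\<forall>a. a \<noteq> bot \<longrightarrow> bc a = bot)"

definition antiortholattice :: "('a::bounded_lattice \<Rightarrow> 'a) \<Rightarrow> ('a \<Rightarrow> 'a) \<Rightarrow> bool" where
  "antiortholattice kc bc \<longleftrightarrow>
     pseudo_kleene kc \<and>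
     {a. inf a (kc a) = bot} = {bot, top} \<and>
     trivial_brouwer bc"

end

theory Submission
  imports Defs
begin

text \<open>If \<open>0\<close> is meet-irreducible, then \<open>a \<sqinter> a' = 0\<close> and \<open>a \<sqinter> a\<^sup>\<sim> = 0\<close> force one
  factor to vanish. For the Kleene complement this leaves only \<open>a = 0\<close> or \<open>a' = 0\<close>,
  i.e. \<open>a \<in> {0, 1}\<close>; for the Brouwer complement it gives \<open>a\<^sup>\<sim> = 0\<close> whenever
  \<open>a \<noteq> 0\<close>, and then \<open>1 \<le> 1\<^sup>\<sim>\<^sup>\<sim> = 0\<^sup>\<sim>\<close>. A chain has meet-irreducible \<open>0\<close>, since
  there the meet of two elements is one of them.\<close>

lemma pseudo_kleene_involutive:
  "pseudo_kleene kc \<Longrightarrow> kc (kc a) = a"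
  by (simp add: pseudo_kleene_def)

lemma pseudo_kleene_antimono:
  "pseudo_kleene kc \<Longrightarrow> a \<le> b \<Longrightarrow> kc b \<le> kc a"
  by (simp add: pseudo_kleene_def)

lemma pseudo_kleene_bot:
  assumes "pseudo_kleene kc"
  shows "kc bot = top"
proof -
  have "kc (kc top) \<le> kc bot"
    using pseudo_kleene_antimono[OF assms] by simp
  then show ?thesis
    by (simp add: pseudo_kleene_involutive[OF assms] top_unique)
qed

lemma pseudo_kleene_top:
  assumes "pseudo_kleene kc"
  shows "kc top = bot"
  using pseudo_kleene_involutive[OF assms, of bot]
  by (simp add: pseudo_kleene_bot[OF assms])

lemma zero_meet_irreducibleD:
  assumes "zero_meet_irreducible TYPE('a::bounded_lattice)" and "inf a b = (bot::'a)"
  shows "a = bot \<or> b = bot"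
  using assms by (simp add: zero_meet_irreducible_def)

lemma zero_meet_irreducible_if_linear:
  assumes "\<forall>a b::'a::bounded_lattice. a \<le> b \<or> b \<le> a"
  shows "zero_meet_irreducible TYPE('a)"
  unfolding zero_meet_irreducible_def
proof (intro allI impI)
  fix a b :: 'a
  assume "inf a b = bot"
  moreover have "inf a b = a \<or> inf a b = b"
    using assms[rule_format, of a b] by (auto simp: inf_absorb1 inf_absorb2)
  ultimately show "a = bot \<or> b = bot"
    by auto
qed

lemma pseudo_kleene_disjoint_elements:
  fixes kc :: "'a::bounded_lattice \<Rightarrow> 'a"
  assumes "pseudo_kleene kc" and "zero_meet_irreducible TYPE('a)"
  shows "{a. inf a (kc a) = bot} = {bot, top}"
proof (intro set_eqI iffI)
  fix a assume "a \<in> {a. inf a (kc a) = bot}"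
  then have "a = bot \<or> kc a = bot"
    using zero_meet_irreducibleD[OF assms(2)] by blast
  moreover have "a = top" if "kc a = bot"
    using pseudo_kleene_involutive[OF assms(1), of a] that
    by (simp add: pseudo_kleene_bot[OF assms(1)])
  ultimately show "a \<in> {bot, top}"
    by blast
next
  fix a assume "a \<in> {bot, top::'a}"
  then show "a \<in> {a. inf a (kc a) = bot}"
    by (auto simp: pseudo_kleene_bot[OF assms(1)] pseudo_kleene_top[OF assms(1)])
qed

lemma BZ_lattice_trivial_brouwer:
  fixes kc bc :: "'a::bounded_lattice \<Rightarrow> 'a"
  assumes "BZ_lattice kc bc" and "zero_meet_irreducible TYPE('a)"
  shows "trivial_brouwer bc"
proof -
  have nonzero: "bc a = bot" if "a \<noteq> bot" for a :: 'a
  proof -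
    have "inf a (bc a) = bot"
      using assms(1) by (simp add: BZ_lattice_def)
    with that show ?thesis
      using zero_meet_irreducibleD[OF assms(2)] by blast
  qed
  have "bc bot = top"
  proof (cases "top = (bot::'a)")
    case True
    then show ?thesis
      by (metis bot_unique top_greatest)
  next
    case False
    have "top \<le> bc (bc top)"
      using assms(1) by (simp add: BZ_lattice_def)
    with False show ?thesis
      by (simp add: nonzero top_unique)
  qed
  with nonzero show ?thesis
    by (simp add: trivial_brouwer_def)
qed

lemma antiortholattice_if_zero_meet_irreducible:
  fixes kc bc :: "'a::bounded_lattice \<Rightarrow> 'a"
  assumes "BZ_lattice kc bc" and "zero_meet_irreducible TYPE('a)"
  shows "antiortholattice kc bc"
proof -
  have "pseudo_kleene kc"
    using assms(1) by (simp add: BZ_lattice_def)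
  then show ?thesis
    unfolding antiortholattice_def
    using pseudo_kleene_disjoint_elements[OF _ assms(2)]
      BZ_lattice_trivial_brouwer[OF assms]
    by blast
qed

theorem lemma3p3:
  fixes kc bc :: "'a::bounded_lattice \<Rightarrow> 'a"
  assumes "BZ_lattice kc bc"
  shows "(zero_meet_irreducible TYPE('a) \<longrightarrow> antiortholattice kc bc)
       \<and> ((\<forall>a b::'a. a \<le> b \<or> b \<le> a) \<longrightarrow> antiortholattice kc bc)"
  using antiortholattice_if_zero_meet_irreducible[OF assms]
    zero_meet_irreducible_if_linear
  by blast

end
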